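(* Let $m,n\geq2$ and let $\mathbf p\in\mathbb R^m$, $\mathbf q\in\mathbb R^n$ be probability vectors with all entries strictly positive. If $P\in\mathcal C(\mathbf p,\mathbf q)$ is local optimal, then $m+n-\kappa(\mathbf p,\mathbf q)\leq|V(P)|\leq m+n-1$.
   Context: $\mathcal C(\mathbf p,\mathbf q)$: nonnegative $m\times n$ matrices $P=(p_{i,j})$ with row sums $p_i$, column sums $q_j$. $V(P)=\{(i,j):p_{i,j}\neq0\}$. $H(A)=-\sum a_{i,j}\log a_{i,j}$ ($0\log0=0$). Structure constant: for $\sigma\in\Sigma_m$ let $F_{\sigma\mathbf p}(i)=\sum_{k\le i}p_{\sigma(k)}$; $\kappa(\mathbf p,\mathbf q)=\max_{(\sigma,\pi)\in\Sigma_m\times\Sigma_n}|\{F_{\sigma\mathbf p}(i):1\le i<m\}\cap\{F_{\pi\mathbf q}(j):1\le j<n\}|+1$. Moves on $P$ (each yields $P'\in\mathcal C(\mathbf p,\mathbf q)$ by replacing the chosen submatrix $A$ by $A'$): (M1) choose distinct rows $i_1,i_2$ and distinct columns $j_1,j_2$, $a_{s,t}=p_{i_s,j_t}$; if $\max(a_{1,1},a_{2,2})\ge\max(a_{1,2},a_{2,1})$, put $b=\min(a_{1,2},a_{2,1})$, $a'_{s,s}=a_{s,s}+b$, $a'_{1,2}=a_{1,2}-b$, $a'_{2,1}=a_{2,1}-b$. (M2) same replacement, allowed when $a_{1,1}+a_{1,2}\ge a_{2,1}+a_{2,2}$, $a_{1,1}+a_{2,1}\ge a_{1,2}+a_{2,2}$,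 $a_{1,2}\ge a_{2,1}$. (M3) distinct rows $i_1,i_2$, distinct columns $j_1,\dots,j_r$ ($r\ge2$), $a_{s,k}=p_{i_s,j_k}$, allowed when $a_{2,k}=0$ for $k\ge2$ and $\sum_{k\ge2}a_{1,k}\le a_{2,1}\le\sum_{k\ge1}a_{1,k}$; replace by $a'_{1,1}=\sum_ka_{1,k}$, $a'_{1,k}=0$, $a'_{2,1}=a_{2,1}-\sum_{k\ge2}a_{1,k}$, $a'_{2,k}=a_{1,k}$ ($k\ge2$); moves may also be applied with rows and columns exchanged. $P$ is local optimal if no such move produces $P'$ with $H(P')<H(P)$. *)

theory Defs
  imports Complex_Main "HOL-Combinatorics.Permutations"
begin

text \<open>Matrices are functions nat => nat => real; an m x n matrix uses indices i < m, j < n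
 (0-based). Vectors p, q are nat => real with indices < m resp. < n.\<close>

definition coupling :: "nat \<Rightarrow> nat \<Rightarrow> (nat \<Rightarrow> real) \<Rightarrow> (nat \<Rightarrow> real) \<Rightarrow> (nat \<Rightarrow> nat \<Rightarrow> real) \<Rightarrow> bool" where
  "coupling m n p q P \<longleftrightarrow>
     (\<forall>i<m. \<forall>j<n. P i j \<ge> 0) \<and>
     (\<forall>i<m. (\<Sum>j<n. P i j) = p i) \<and>
     (\<forall>j<n. (\<Sum>i<m. P i j) = q j)"

definition supp :: "nat \<Rightarrow> nat \<Rightarrow> (nat \<Rightarrow> nat \<Rightarrow> real) \<Rightarrow> (nat \<times> nat) set" where
  "supp m n P = {(i, j). i < m \<and> j < n \<and> P i j \<noteq> 0}"

text \<open>Entropy; note ln 0 = 0 in Isabelle, so 0 * ln 0 = 0.\<close>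
definition entropy :: "nat \<Rightarrow> nat \<Rightarrow> (nat \<Rightarrow> nat \<Rightarrow> real) \<Rightarrow> real" where
  "entropy m n P = - (\<Sum>i<m. \<Sum>j<n. P i j * ln (P i j))"


definition prob_vec :: "nat \<Rightarrow> (nat \<Rightarrow> real) \<Rightarrow> bool" where
  "prob_vec m p \<longleftrightarrow> (\<forall>i<m. p i > 0) \<and> (\<Sum>i<m. p i) = 1"

definition partial_sums :: "nat \<Rightarrow> (nat \<Rightarrow> real) \<Rightarrow> (nat \<Rightarrow> nat) \<Rightarrow> real set" where
  "partial_sums m p \<sigma> = {(\<Sum>k<i. p (\<sigma> k)) | i. 1 \<le> i \<and> i < m}"

definition kappa :: "nat \<Rightarrow> nat \<Rightarrow> (nat \<Rightarrow> real) \<Rightarrow> (nat \<Rightarrow> real) \<Rightarrow> nat" where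
  "kappa m n p q = Max {card (partial_sums m p \<sigma> \<inter> partial_sums n q \<pi>) | \<sigma> \<pi>.
                         \<sigma> permutes {..<m} \<and> \<pi> permutes {..<n}} + 1"

definition swap2 :: "(nat \<Rightarrow> nat \<Rightarrow> real) \<Rightarrow> nat \<Rightarrow> nat \<Rightarrow> nat \<Rightarrow> nat \<Rightarrow> nat \<Rightarrow> nat \<Rightarrow> real" where
  "swap2 P i1 i2 j1 j2 = (let b = min (P i1 j2) (P i2 j1) in
     (\<lambda>i j. if (i = i1 \<and> j = j1) \<or> (i = i2 \<and> j = j2) then P i j + b
            else if (i = i1 \<and> j = j2) \<or> (i = i2 \<and> j = j1) then P i j - b
            else P i j))"

definition move1 :: "nat \<Rightarrow> nat \<Rightarrow> (nat \<Rightarrow> nat \<Rightarrow> real) \<Rightarrow> (nat \<Rightarrow> nat \<Rightarrow> real) \<Rightarrow> bool" where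
  "move1 m n P P' \<longleftrightarrow> (\<exists>i1 i2 j1 j2. i1 < m \<and> i2 < m \<and> i1 \<noteq> i2 \<and> j1 < n \<and> j2 < n \<and> j1 \<noteq> j2 \<and>
     max (P i1 j1) (P i2 j2) \<ge> max (P i1 j2) (P i2 j1) \<and> P' = swap2 P i1 i2 j1 j2)"

definition move2 :: "nat \<Rightarrow> nat \<Rightarrow> (nat \<Rightarrow> nat \<Rightarrow> real) \<Rightarrow> (nat \<Rightarrow> nat \<Rightarrow> real) \<Rightarrow> bool" where
  "move2 m n P P' \<longleftrightarrow> (\<exists>i1 i2 j1 j2. i1 < m \<and> i2 < m \<and> i1 \<noteq> i2 \<and> j1 < n \<and> j2 < n \<and> j1 \<noteq> j2 \<and>
     P i1 j1 + P i1 j2 \<ge> P i2 j1 + P i2 j2 \<and>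
     P i1 j1 + P i2 j1 \<ge> P i1 j2 + P i2 j2 \<and>
     P i1 j2 \<ge> P i2 j1 \<and> P' = swap2 P i1 i2 j1 j2)"

text \<open>(M3): columns j_1 = j1 and {j_2,...,j_r} = J, a nonempty set of columns not containing j1.\<close>
definition move3 :: "nat \<Rightarrow> nat \<Rightarrow> (nat \<Rightarrow> nat \<Rightarrow> real) \<Rightarrow> (nat \<Rightarrow> nat \<Rightarrow> real) \<Rightarrow> bool" where
  "move3 m n P P' \<longleftrightarrow> (\<exists>i1 i2 j1 J. i1 < m \<and> i2 < m \<and> i1 \<noteq> i2 \<and> j1 < n \<and>
     J \<subseteq> {..<n} \<and> J \<noteq> {} \<and> j1 \<notin> J \<and>
     (\<forall>j\<in>J. P i2 j = 0) \<and>
     (\<Sum>j\<in>J. P i1 j) \<le> P i2 j1 \<and> P i2 j1 \<le> P i1 j1 + (\<Sum>j\<in>J. P i1 j) \<and>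
     P' = (\<lambda>i j. if i = i1 \<and> j = j1 then P i1 j1 + (\<Sum>k\<in>J. P i1 k)
                 else if i = i1 \<and> j \<in> J then 0
                 else if i = i2 \<and> j = j1 then P i2 j1 - (\<Sum>k\<in>J. P i1 k)
                 else if i = i2 \<and> j \<in> J then P i1 j
                 else P i j))"

definition row_move :: "nat \<Rightarrow> nat \<Rightarrow> (nat \<Rightarrow> nat \<Rightarrow> real) \<Rightarrow> (nat \<Rightarrow> nat \<Rightarrow> real) \<Rightarrow> bool" where
  "row_move m n P P' \<longleftrightarrow> move1 m n P P' \<or> move2 m n P P' \<or> move3 m n P P'"

definition move :: "nat \<Rightarrow> nat \<Rightarrow> (nat \<Rightarrow> nat \<Rightarrow> real) \<Rightarrow> (nat \<Rightarrow> nat \<Rightarrow> real) \<Rightarrow> bool" where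
  "move m n P P' \<longleftrightarrow> row_move m n P P' \<or>
     row_move n m (\<lambda>j i. P i j) (\<lambda>j i. P' i j)"

definition local_optimal :: "nat \<Rightarrow> nat \<Rightarrow> (nat \<Rightarrow> real) \<Rightarrow> (nat \<Rightarrow> real) \<Rightarrow> (nat \<Rightarrow> nat \<Rightarrow> real) \<Rightarrow> bool" where
  "local_optimal m n p q P \<longleftrightarrow> coupling m n p q P \<and>
     \<not> (\<exists>P'. move m n P P' \<and> entropy m n P' < entropy m n P)"

end

theory Submission
  imports Defs
begin

text \<open>
  Upper bound: if the support had at least \<open>m + n\<close> entries, deleting rows and columns that
  carry a single support entry would leave a nonempty block in which every support entry has a
  second one in its row and in its column. The largest entry \<open>P r c\<close> of that block, together
  with \<open>P r c'\<close> and \<open>P r' c\<close>, admits move (M1), and this move strictly lowers the entropy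
  because \<open>x \<mapsto> (x + h) ln (x + h) - x ln x\<close> is increasing.

  Lower bound: in the bipartite support graph (rows and columns as vertices, support entries as
  edges) there are at least \<open>m + n - |V(P)|\<close> components, and each component carries the same
  mass under \<open>p\<close> as under \<open>q\<close>. Listing rows and columns component by component gives orderings
  \<open>\<sigma>, \<pi>\<close> whose partial sums share the masses of the first \<open>1, \<dots>, c - 1\<close> components, so the
  number \<open>c\<close> of components is at most \<open>\<kappa>(p, q)\<close>.
\<close>

lemma xlnx_increment_strict_mono:
  fixes x y h :: real
  assumes "0 \<le> x" "x < y" "0 < h"
  shows "(x + h) * ln (x + h) - x * ln x < (y + h) * ln (y + h) - y * ln y"
proof (cases "x = 0")
  case True
  have "y * ln y + h * ln h < y * ln (y + h) + h * ln (y + h)"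
    using assms True by (intro add_strict_mono mult_strict_left_mono) auto
  then show ?thesis
    using True by (simp add: algebra_simps)
next
  case False
  let ?f = "\<lambda>t::real. (t + h) * ln (t + h) - t * ln t"
  show ?thesis
  proof (rule DERIV_pos_imp_increasing[OF assms(2)])
    fix t assume "x \<le> t" "t \<le> y"
    with False assms have t: "0 < t" by simp
    have "DERIV ?f t :> (ln (t + h) + 1) - (ln t + 1)"
      using t assms by (auto intro!: derivative_eq_intros)
    moreover have "ln t < ln (t + h)"
      using t assms by simp
    ultimately show "\<exists>d. DERIV ?f t :> d \<and> 0 < d"
      by force
  qed
qed

lemma xlnx_increment_mono:
  fixes x y h :: real
  assumes "0 \<le> x" "x \<le> y" "0 \<le> h"
  shows "(x + h) * ln (x + h) - x * ln x \<le> (y + h) * ln (y + h) - y * ln y"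
  using xlnx_increment_strict_mono[of x y h] assms
  by (cases "x = y"; cases "h = 0") auto

lemma xlnx_sum_less_after_transfer:
  fixes d z u v :: real
  assumes "u \<le> d" "v \<le> d" "0 < u" "0 < v" "0 \<le> z"
  shows "d * ln d + z * ln z + u * ln u + v * ln v <
    (d + min u v) * ln (d + min u v) + (z + min u v) * ln (z + min u v)
    + (u - min u v) * ln (u - min u v) + (v - min u v) * ln (v - min u v)"
proof -
  have gain: "d * ln d + z * ln z + a * ln a + b * ln b <
      (d + b) * ln (d + b) + (z + b) * ln (z + b) + (a - b) * ln (a - b)"
    if "b \<le> a" "a \<le> d" "0 < b" for a b
  proof -
    have "(a - b + b) * ln (a - b + b) - (a - b) * ln (a - b) < (d + b) * ln (d + b) - d * ln d"
      using xlnx_increment_strict_mono[of "a - b" d b] that by simp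
    moreover have "(0 + b) * ln (0 + b) - 0 * ln 0 \<le> (z + b) * ln (z + b) - z * ln z"
      using xlnx_increment_mono[of 0 z b] that assms by simp
    ultimately show ?thesis
      by simp
  qed
  show ?thesis
  proof (cases "v \<le> u")
    case True
    then show ?thesis
      using gain[of v u] assms by simp
  next
    case False
    then show ?thesis
      using gain[of u v] assms by (simp add: algebra_simps)
  qed
qed

lemma double_sum_supported_on_2x2:
  fixes D :: "nat \<Rightarrow> nat \<Rightarrow> real"
  assumes "i1 < m" "i2 < m" "i1 \<noteq> i2" "j1 < n" "j2 < n" "j1 \<noteq> j2"
    and "\<And>i j. \<not> ((i = i1 \<or> i = i2) \<and> (j = j1 \<or> j = j2)) \<Longrightarrow> D i j = 0"
  shows "(\<Sum>i<m. \<Sum>j<n. D i j) = D i1 j1 + D i1 j2 + D i2 j1 + D i2 j2"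
proof -
  have "(\<Sum>i<m. \<Sum>j<n. D i j) = (\<Sum>i\<in>{i1, i2}. \<Sum>j<n. D i j)"
    by (rule sum.mono_neutral_right) (use assms in auto)
  also have "\<dots> = (\<Sum>i\<in>{i1, i2}. \<Sum>j\<in>{j1, j2}. D i j)"
    by (intro sum.cong refl sum.mono_neutral_right) (use assms in auto)
  finally show ?thesis
    using assms by simp
qed

lemma entropy_swap2_less:
  assumes "i1 < m" "i2 < m" "i1 \<noteq> i2" "j1 < n" "j2 < n" "j1 \<noteq> j2"
    and "P i1 j2 \<le> P i1 j1" "P i2 j1 \<le> P i1 j1"
    and "0 < P i1 j2" "0 < P i2 j1" "0 \<le> P i2 j2"
  shows "entropy m n (swap2 P i1 i2 j1 j2) < entropy m n P"
proof -
  let ?Q = "swap2 P i1 i2 j1 j2"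
  let ?D = "\<lambda>i j. ?Q i j * ln (?Q i j) - P i j * ln (P i j)"
  have "entropy m n P - entropy m n ?Q = (\<Sum>i<m. \<Sum>j<n. ?D i j)"
    unfolding entropy_def by (simp add: sum_subtractf)
  also have "\<dots> = ?D i1 j1 + ?D i1 j2 + ?D i2 j1 + ?D i2 j2"
    by (rule double_sum_supported_on_2x2) (use assms in \<open>auto simp: swap2_def Let_def\<close>)
  also have "\<dots> > 0"
    using xlnx_sum_less_after_transfer[of "P i1 j2" "P i1 j1" "P i2 j1" "P i2 j2"] assms
    by (simp add: swap2_def Let_def algebra_simps)
  finally show ?thesis
    by simp
qed

lemma local_optimal_corner_not_dominant:
  assumes "local_optimal m n p q P"
    and "i1 < m" "i2 < m" "i1 \<noteq> i2" "j1 < n" "j2 < n" "j1 \<noteq> j2"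
    and "0 < P i1 j2" "0 < P i2 j1"
  shows "P i1 j1 < max (P i1 j2) (P i2 j1)"
proof (rule ccontr)
  assume "\<not> ?thesis"
  then have dominant: "P i1 j2 \<le> P i1 j1" "P i2 j1 \<le> P i1 j1"
    by auto
  have "0 \<le> P i2 j2"
    using assms by (simp add: local_optimal_def coupling_def)
  then have "entropy m n (swap2 P i1 i2 j1 j2) < entropy m n P"
    using assms dominant by (intro entropy_swap2_less) auto
  moreover have "move m n P (swap2 P i1 i2 j1 j2)"
    unfolding move_def row_move_def move1_def
    using assms dominant by (intro disjI1 exI[of _ i1] exI[of _ i2] exI[of _ j1] exI[of _ j2]) auto
  ultimately show False
    using assms(1) by (auto simp: local_optimal_def)
qed

definition supp_on :: "(nat \<Rightarrow> nat \<Rightarrow> real) \<Rightarrow> nat set \<Rightarrow> nat set \<Rightarrow> (nat \<times> nat) set" where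
  "supp_on P R C = {(i, j). i \<in> R \<and> j \<in> C \<and> P i j \<noteq> 0}"

lemma finite_supp_on: "finite R \<Longrightarrow> finite C \<Longrightarrow> finite (supp_on P R C)"
  by (rule finite_subset[of _ "R \<times> C"]) (auto simp: supp_on_def)

lemma supp_eq_supp_on: "supp m n P = supp_on P {..<m} {..<n}"
  by (simp add: supp_def supp_on_def)

definition core_block :: "(nat \<Rightarrow> nat \<Rightarrow> real) \<Rightarrow> nat set \<Rightarrow> nat set \<Rightarrow> bool" where
  "core_block P R C \<longleftrightarrow> supp_on P R C \<noteq> {} \<and>
     (\<forall>(i, j)\<in>supp_on P R C. (\<exists>j'\<in>C. j' \<noteq> j \<and> P i j' \<noteq> 0) \<and> (\<exists>i'\<in>R. i' \<noteq> i \<and> P i' j \<noteq> 0))"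

lemma card_supp_on_remove_row:
  assumes "finite R" "finite C" "\<forall>j'\<in>C. j' \<noteq> j \<longrightarrow> P i j' = 0"
  shows "card (supp_on P R C) \<le> card (supp_on P (R - {i}) C) + 1"
proof -
  have "supp_on P R C \<subseteq> insert (i, j) (supp_on P (R - {i}) C)"
    using assms by (auto simp: supp_on_def)
  then have "card (supp_on P R C) \<le> card (insert (i, j) (supp_on P (R - {i}) C))"
    using assms by (intro card_mono finite_insert[THEN iffD2] finite_supp_on) auto
  also have "\<dots> \<le> card (supp_on P (R - {i}) C) + 1"
    by (simp add: card_insert_le_m1 card_insert_if)
  finally show ?thesis .
qed

lemma card_supp_on_remove_col:
  assumes "finite R" "finite C" "\<forall>i'\<in>R. i' \<noteq> i \<longrightarrow> P i' j = 0"
  shows "card (supp_on P R C) \<le> card (supp_on P R (C - {j})) + 1"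
proof -
  have "supp_on P R C \<subseteq> insert (i, j) (supp_on P R (C - {j}))"
    using assms by (auto simp: supp_on_def)
  then have "card (supp_on P R C) \<le> card (insert (i, j) (supp_on P R (C - {j})))"
    using assms by (intro card_mono finite_insert[THEN iffD2] finite_supp_on) auto
  also have "\<dots> \<le> card (supp_on P R (C - {j})) + 1"
    by (simp add: card_insert_le_m1 card_insert_if)
  finally show ?thesis .
qed

lemma core_block_exists:
  assumes "finite R" "finite C" "R \<noteq> {} \<or> C \<noteq> {}"
    and "card R + card C \<le> card (supp_on P R C)"
  shows "\<exists>R'\<subseteq>R. \<exists>C'\<subseteq>C. core_block P R' C'"
  using assms
proof (induction "card R + card C" arbitrary: R C rule: less_induct)
  case less
  consider (row_leaf) i j where "i \<in> R" "j \<in> C" "P i j \<noteq> 0" "\<forall>j'\<in>C. j' \<noteq> j \<longrightarrow> P i j' = 0"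
    | (col_leaf) i j where "i \<in> R" "j \<in> C" "P i j \<noteq> 0" "\<forall>i'\<in>R. i' \<noteq> i \<longrightarrow> P i' j = 0"
    | (core) "core_block P R C"
  proof -
    have "card R + card C > 0"
      using less.prems by (auto simp: card_gt_0_iff)
    then have "supp_on P R C \<noteq> {}"
      using less.prems(4) by auto
    then show thesis
      using that unfolding core_block_def supp_on_def by blast
  qed
  then show ?case
  proof cases
    case row_leaf
    have "card (R - {i}) + card C < card R + card C"
      using card_Diff1_less[OF less.prems(1) row_leaf(1)] by linarith
    moreover have "card (R - {i}) + card C \<le> card (supp_on P (R - {i}) C)"
      using card_supp_on_remove_row[of R C j P i] card_Diff1_less[OF less.prems(1) row_leaf(1)]
        row_leaf less.prems by simp
    ultimately show ?thesis
      using less.hyps[of "R - {i}" C] less.prems row_leaf by blast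
  next
    case col_leaf
    have "card R + card (C - {j}) < card R + card C"
      using card_Diff1_less[OF less.prems(2) col_leaf(2)] by linarith
    moreover have "card R + card (C - {j}) \<le> card (supp_on P R (C - {j}))"
      using card_supp_on_remove_col[of R C i P j] card_Diff1_less[OF less.prems(2) col_leaf(2)]
        col_leaf less.prems by simp
    ultimately show ?thesis
      using less.hyps[of R "C - {j}"] less.prems col_leaf by blast
  qed blast
qed

lemma core_block_max_entry:
  assumes "finite R" "finite C" "core_block P R C" "\<forall>i\<in>R. \<forall>j\<in>C. 0 \<le> P i j"
  obtains r r' c c' where "r \<in> R" "r' \<in> R" "r \<noteq> r'" "c \<in> C" "c' \<in> C" "c \<noteq> c'"
    "0 < P r c'" "0 < P r' c" "P r c' \<le> P r c" "P r' c \<le> P r c"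
proof -
  let ?S = "supp_on P R C"
  have "finite ?S" "?S \<noteq> {}"
    using assms by (auto simp: finite_supp_on core_block_def)
  then obtain r c where rc: "(r, c) \<in> ?S" and max: "\<And>i j. (i, j) \<in> ?S \<Longrightarrow> P i j \<le> P r c"
    using Max_in[of "(\<lambda>(i, j). P i j) ` ?S"] Max_ge[of "(\<lambda>(i, j). P i j) ` ?S"] by fastforce
  obtain c' where c': "c' \<in> C" "c' \<noteq> c" "P r c' \<noteq> 0"
    using assms(3) rc unfolding core_block_def by blast
  obtain r' where r': "r' \<in> R" "r' \<noteq> r" "P r' c \<noteq> 0"
    using assms(3) rc unfolding core_block_def by blast
  show thesis
  proof (rule that[of r r' c c'])
    show "0 < P r c'" "0 < P r' c"
      using assms(4) rc c' r' by (force simp: supp_on_def)+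
    show "P r c' \<le> P r c" "P r' c \<le> P r c"
      using max rc c' r' by (auto simp: supp_on_def)
  qed (use rc c' r' in \<open>auto simp: supp_on_def\<close>)
qed

lemma local_optimal_card_supp_less:
  assumes "local_optimal m n p q P" "0 < m + n"
  shows "card (supp m n P) < m + n"
proof (rule ccontr)
  assume "\<not> ?thesis"
  then have "card {..<m} + card {..<n} \<le> card (supp_on P {..<m} {..<n})"
    by (simp add: supp_eq_supp_on)
  then obtain R C where RC: "R \<subseteq> {..<m}" "C \<subseteq> {..<n}" "core_block P R C"
    using core_block_exists[of "{..<m}" "{..<n}" P] assms(2) by auto
  moreover have "\<forall>i\<in>R. \<forall>j\<in>C. 0 \<le> P i j"
    using assms(1) RC by (auto simp: local_optimal_def coupling_def)
  ultimately obtain r r' c c' where "r \<in> R" "r' \<in> R" "r \<noteq> r'" "c \<in> C" "c' \<in> C" "c \<noteq> c'"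
    "0 < P r c'" "0 < P r' c" "P r c' \<le> P r c" "P r' c \<le> P r c"
    using core_block_max_entry[of R C P] finite_subset by blast
  then show False
    using local_optimal_corner_not_dominant[OF assms(1), of r r' c c'] RC by fastforce
qed

lemma exists_component_labelling:
  fixes E :: "('a \<times> 'a) set" and V :: "'a set"
  assumes "finite E" "finite V"
  shows "\<exists>lab :: 'a \<Rightarrow> 'a. (\<forall>(u, v)\<in>E. lab u = lab v) \<and> card V \<le> card (lab ` V) + card E"
  using assms(1)
proof (induction E rule: finite_induct)
  case empty
  show ?case
    by (rule exI[of _ id]) simp
next
  case (insert e E)
  obtain lab :: "'a \<Rightarrow> 'a" where lab: "\<forall>(u, v)\<in>E. lab u = lab v" "card V \<le> card (lab ` V) + card E"
    using insert.IH by blast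
  obtain a b where e: "e = (a, b)"
    by (cases e)
  define lab' where "lab' x = (if lab x = lab b then lab a else lab x)" for x
  have "lab ` V \<subseteq> insert (lab b) (lab' ` V)"
    by (auto simp: lab'_def image_iff)
  then have "card (lab ` V) \<le> card (insert (lab b) (lab' ` V))"
    using assms(2) by (intro card_mono) auto
  also have "\<dots> \<le> card (lab' ` V) + 1"
    using assms(2) by (simp add: card_insert_if)
  moreover have "\<forall>(u, v)\<in>insert e E. lab' u = lab' v"
    using lab(1) e by (auto simp: lab'_def)
  ultimately show ?case
    using lab(2) insert.hyps by auto
qed

lemma coupling_sum_balanced:
  assumes "coupling m n p q P" "R \<subseteq> {..<m}" "C \<subseteq> {..<n}"
    and "\<And>i j. i < m \<Longrightarrow> j < n \<Longrightarrow> P i j \<noteq> 0 \<Longrightarrow> i \<in> R \<longleftrightarrow> j \<in> C"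
  shows "sum p R = sum q C"
proof -
  have "sum p R = (\<Sum>i\<in>R. \<Sum>j<n. P i j)"
    using assms(1,2) by (intro sum.cong) (auto simp: coupling_def)
  also have "\<dots> = (\<Sum>i\<in>R. \<Sum>j\<in>C. P i j)"
    using assms(2-4) by (intro sum.cong refl sum.mono_neutral_right) auto
  also have "\<dots> = (\<Sum>j\<in>C. \<Sum>i\<in>R. P i j)"
    by (rule sum.swap)
  also have "\<dots> = (\<Sum>j\<in>C. \<Sum>i<m. P i j)"
    using assms(2-4) by (intro sum.cong refl sum.mono_neutral_left) auto
  also have "\<dots> = sum q C"
    using assms(1,3) by (intro sum.cong) (auto simp: coupling_def)
  finally show ?thesis .
qed

lemma coupling_row_has_nonzero:
  assumes "coupling m n p q P" "i < m" "p i \<noteq> 0"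
  obtains j where "j < n" "P i j \<noteq> 0"
proof -
  have "(\<Sum>j<n. P i j) \<noteq> 0"
    using assms by (simp add: coupling_def)
  then show thesis
    using that by (rule sum.not_neutral_contains_not_neutral) simp
qed

lemma coupling_col_has_nonzero:
  assumes "coupling m n p q P" "j < n" "q j \<noteq> 0"
  obtains i where "i < m" "P i j \<noteq> 0"
proof -
  have "(\<Sum>i<m. P i j) \<noteq> 0"
    using assms by (simp add: coupling_def)
  then show thesis
    using that by (rule sum.not_neutral_contains_not_neutral) simp
qed

lemma permutes_of_distinct_enumeration:
  assumes "distinct xs" "set xs = {..<N}"
  obtains \<sigma> where "\<sigma> permutes {..<N}" "\<And>k. k < N \<Longrightarrow> \<sigma> k = xs ! k"
proof -
  have "length xs = N"
    using distinct_card[OF assms(1)] assms(2) by simp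
  have "mset xs = mset [0..<N]"
    using set_eq_iff_mset_eq_distinct[of xs "[0..<N]"] assms by (simp add: lessThan_atLeast0)
  then obtain \<sigma> where "\<sigma> permutes {..<length [0..<N]}" "permute_list \<sigma> [0..<N] = xs"
    by (rule mset_eq_permutation)
  then have \<sigma>: "\<sigma> permutes {..<N}" "permute_list \<sigma> [0..<N] = xs"
    by simp_all
  show thesis
  proof (rule that[OF \<sigma>(1)])
    fix k assume "k < N"
    then show "\<sigma> k = xs ! k"
      using \<sigma> permute_list_nth[of \<sigma> "[0..<N]" k] permutes_in_image[OF \<sigma>(1)] by simp
  qed
qed

lemma exists_permutes_enumerating_blocks:
  fixes F :: "nat \<Rightarrow> nat set"
  assumes "disjoint_family_on F {..<c}" "(\<Union>s<c. F s) = {..<N}"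
  obtains \<sigma> where "\<sigma> permutes {..<N}"
    "\<And>t. t \<le> c \<Longrightarrow> \<sigma> ` {..<card (\<Union>s<t. F s)} = (\<Union>s<t. F s)"
proof -
  have fin: "finite (F s)" if "s < c" for s
    using finite_subset[of "F s" "{..<N}"] assms(2) that by blast
  define xs_upto where "xs_upto t = concat (map (\<lambda>s. sorted_list_of_set (F s)) [0..<t])" for t
  define xs where "xs = xs_upto c"
  have set_xs_upto: "set (xs_upto t) = (\<Union>s<t. F s)" if "t \<le> c" for t
    using fin that by (auto simp: xs_upto_def)
  have length_xs_upto: "length (xs_upto t) = card (\<Union>s<t. F s)" if "t \<le> c" for t
  proof -
    have "length (xs_upto t) = (\<Sum>s<t. card (F s))"
      by (simp add: xs_upto_def length_concat interv_sum_list_conv_sum_set_nat atLeast0LessThan)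
    also have "\<dots> = card (\<Union>s<t. F s)"
      using fin assms(1) that by (intro card_UN_disjoint[symmetric]) (auto simp: disjoint_family_on_def)
    finally show ?thesis .
  qed
  have set_xs: "set xs = {..<N}" and length_xs: "length xs = N"
    using set_xs_upto length_xs_upto assms(2) by (simp_all add: xs_def)
  then have "distinct xs"
    by (intro card_distinct) simp
  then obtain \<sigma> where \<sigma>: "\<sigma> permutes {..<N}" and nth_xs: "\<And>k. k < N \<Longrightarrow> \<sigma> k = xs ! k"
    using permutes_of_distinct_enumeration set_xs by blast
  show thesis
  proof (rule that[OF \<sigma>(1)])
    fix t assume "t \<le> c"
    then have "[0..<c] = [0..<t] @ [t..<c]"
      by (metis le0 le_add_diff_inverse upt_add_eq_append)
    then have split: "xs = xs_upto t @ concat (map (\<lambda>s. sorted_list_of_set (F s)) [t..<c])"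
      by (simp add: xs_def xs_upto_def)
    let ?a = "card (\<Union>s<t. F s)"
    have "?a \<le> N"
      using length_xs_upto[OF \<open>t \<le> c\<close>] split length_xs by simp
    then have "\<sigma> ` {..<?a} = (!) xs ` {0..<?a}"
      using nth_xs by (auto simp: image_def)
    also have "\<dots> = set (take ?a xs)"
      using \<open>?a \<le> N\<close> length_xs by (simp add: nth_image)
    also have "\<dots> = (\<Union>s<t. F s)"
      using split length_xs_upto[OF \<open>t \<le> c\<close>] set_xs_upto[OF \<open>t \<le> c\<close>] by simp
    finally show "\<sigma> ` {..<?a} = (\<Union>s<t. F s)" .
  qed
qed

lemma block_prefix_sums_in_partial_sums:
  fixes F :: "nat \<Rightarrow> nat set" and w :: "nat \<Rightarrow> real"
  assumes "disjoint_family_on F {..<c}" "(\<Union>s<c. F s) = {..<N}" "\<And>s. s < c \<Longrightarrow> F s \<noteq> {}"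
  obtains \<sigma> where "\<sigma> permutes {..<N}"
    "\<And>t. 1 \<le> t \<Longrightarrow> t < c \<Longrightarrow> (\<Sum>s<t. sum w (F s)) \<in> partial_sums N w \<sigma>"
proof -
  obtain \<sigma> where \<sigma>: "\<sigma> permutes {..<N}"
    "\<And>t. t \<le> c \<Longrightarrow> \<sigma> ` {..<card (\<Union>s<t. F s)} = (\<Union>s<t. F s)"
    using exists_permutes_enumerating_blocks[OF assms(1,2)] by blast
  have fin: "finite (F s)" if "s < c" for s
    using finite_subset[of "F s" "{..<N}"] assms(2) that by blast
  show thesis
  proof (rule that[OF \<sigma>(1)])
    fix t assume t: "1 \<le> t" "t < c"
    let ?U = "\<Union>s<t. F s"
    have "F 0 \<subseteq> ?U" "F 0 \<noteq> {}" "finite ?U"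
      using t fin assms(3) by (auto intro!: bexI[of _ 0])
    then have "0 < card ?U"
      by (auto simp: card_gt_0_iff)
    have "F t \<inter> F s = {}" if "s < t" for s
      using assms(1) t that unfolding disjoint_family_on_def by simp
    then have disj: "F t \<inter> ?U = {}"
      by blast
    have sub: "F t \<union> ?U \<subseteq> (\<Union>s<c. F s)"
      using t by (auto intro: less_trans)
    obtain x where "x \<in> F t"
      using assms(3)[OF t(2)] by blast
    then have "x \<notin> ?U" "x \<in> (\<Union>s<c. F s)"
      using disj sub by blast+
    then have "?U \<subset> (\<Union>s<c. F s)"
      using sub by (intro psubsetI) auto
    then have "card ?U < N"
      using psubset_card_mono[of "\<Union>s<c. F s" ?U] assms(2) by simp
    have "inj_on \<sigma> {..<card ?U}"
      using \<open>card ?U < N\<close> by (intro inj_on_subset[OF permutes_inj_on[OF \<sigma>(1)]]) auto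
    then have "(\<Sum>k<card ?U. w (\<sigma> k)) = sum w (\<sigma> ` {..<card ?U})"
      by (simp add: sum.reindex)
    also have "\<dots> = (\<Sum>s<t. sum w (F s))"
      using \<sigma>(2) t fin assms(1)
      by (simp add: sum.UNION_disjoint disjoint_family_on_def)
    finally show "(\<Sum>s<t. sum w (F s)) \<in> partial_sums N w \<sigma>"
      unfolding partial_sums_def using \<open>0 < card ?U\<close> \<open>card ?U < N\<close>
      by (intro CollectI exI[of _ "card ?U"]) simp
  qed
qed

lemma finite_partial_sums: "finite (partial_sums m p \<sigma>)"
  by (rule finite_subset[of _ "(\<lambda>i. \<Sum>k<i. p (\<sigma> k)) ` {..<m}"]) (auto simp: partial_sums_def)

lemma card_partial_sums_inter_less_kappa:
  assumes "\<sigma> permutes {..<m}" "\<pi> permutes {..<n}"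
  shows "card (partial_sums m p \<sigma> \<inter> partial_sums n q \<pi>) < kappa m n p q"
proof -
  let ?card_inter = "\<lambda>(\<sigma>, \<pi>). card (partial_sums m p \<sigma> \<inter> partial_sums n q \<pi>)"
  let ?K = "{card (partial_sums m p \<sigma> \<inter> partial_sums n q \<pi>) | \<sigma> \<pi>.
              \<sigma> permutes {..<m} \<and> \<pi> permutes {..<n}}"
  have "?K \<subseteq> ?card_inter ` ({\<sigma>. \<sigma> permutes {..<m}} \<times> {\<pi>. \<pi> permutes {..<n}})"
    by auto
  then have "finite ?K"
    by (rule finite_subset) (simp add: finite_permutations)
  then have "card (partial_sums m p \<sigma> \<inter> partial_sums n q \<pi>) \<le> Max ?K"
    using assms by (intro Max_ge) auto
  then show ?thesis
    by (simp add: kappa_def)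
qed

lemma strict_mono_on_prefix_sums:
  fixes f :: "nat \<Rightarrow> real"
  assumes "\<And>s. s < c \<Longrightarrow> 0 < f s"
  shows "strict_mono_on {..<c} (\<lambda>t. \<Sum>s<t. f s)"
proof (rule strict_mono_onI)
  fix t t' :: nat assume "t' \<in> {..<c}" "t < t'"
  have "(\<Sum>s<t'. f s) = (\<Sum>s\<in>{..<t'} - {..<t}. f s) + (\<Sum>s<t. f s)"
    using \<open>t < t'\<close> by (intro sum.subset_diff) auto
  moreover have "0 < (\<Sum>s\<in>{..<t'} - {..<t}. f s)"
    using \<open>t' \<in> {..<c}\<close> \<open>t < t'\<close> by (intro sum_pos assms) auto
  ultimately show "(\<Sum>s<t. f s) < (\<Sum>s<t'. f s)"
    by simp
qed

lemma card_le_kappa_of_common_prefix_sums: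
  fixes f :: "nat \<Rightarrow> real"
  assumes "\<sigma> permutes {..<m}" "\<pi> permutes {..<n}" "\<And>s. s < c \<Longrightarrow> 0 < f s"
    and "\<And>t. 1 \<le> t \<Longrightarrow> t < c \<Longrightarrow> (\<Sum>s<t. f s) \<in> partial_sums m p \<sigma> \<inter> partial_sums n q \<pi>"
  shows "c \<le> kappa m n p q"
proof -
  let ?W = "\<lambda>t. \<Sum>s<t. f s"
  have "inj_on ?W {1..<c}"
    using strict_mono_on_prefix_sums[OF assms(3)]
    by (rule strict_mono_on_imp_inj_on[THEN inj_on_subset]) auto
  then have "c - 1 = card (?W ` {1..<c})"
    by (simp add: card_image)
  also have "\<dots> \<le> card (partial_sums m p \<sigma> \<inter> partial_sums n q \<pi>)"
    using assms(4) by (intro card_mono) (auto simp: finite_partial_sums)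
  finally show ?thesis
    using card_partial_sums_inter_less_kappa[OF assms(1,2), of p q] by linarith
qed

lemma card_le_kappa_of_balanced_blocks:
  fixes A B :: "'l \<Rightarrow> nat set"
  assumes "finite \<Lambda>" "\<And>l. l \<in> \<Lambda> \<Longrightarrow> A l \<noteq> {}" "\<And>l. l \<in> \<Lambda> \<Longrightarrow> B l \<noteq> {}"
    and "disjoint_family_on A \<Lambda>" "disjoint_family_on B \<Lambda>"
    and "(\<Union>l\<in>\<Lambda>. A l) = {..<m}" "(\<Union>l\<in>\<Lambda>. B l) = {..<n}"
    and "\<And>l. l \<in> \<Lambda> \<Longrightarrow> sum p (A l) = sum q (B l)"
    and "\<And>i. i < m \<Longrightarrow> 0 < p i"
  shows "card \<Lambda> \<le> kappa m n p q"
proof -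
  define c where "c = card \<Lambda>"
  obtain e where e: "bij_betw e {..<c} \<Lambda>"
    using ex_bij_betw_nat_finite[OF assms(1)] by (auto simp: c_def lessThan_atLeast0)
  have reindex: "(\<Union>s<c. X (e s)) = (\<Union>l\<in>\<Lambda>. X l)" for X :: "'l \<Rightarrow> nat set"
    using e by (auto simp: bij_betw_def)
  have disjoint: "disjoint_family_on (X \<circ> e) {..<c}" if "disjoint_family_on X \<Lambda>" for X :: "'l \<Rightarrow> nat set"
    using that e by (auto simp: disjoint_family_on_def bij_betw_def inj_on_def)
  have in_\<Lambda>: "e s \<in> \<Lambda>" if "s < c" for s
    using e that by (auto simp: bij_betw_def)
  obtain \<sigma> where \<sigma>: "\<sigma> permutes {..<m}"
    "\<And>t. 1 \<le> t \<Longrightarrow> t < c \<Longrightarrow> (\<Sum>s<t. sum p (A (e s))) \<in> partial_sums m p \<sigma>"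
    using block_prefix_sums_in_partial_sums[of "A \<circ> e" c m p] disjoint[OF assms(4)] reindex assms(2,6) in_\<Lambda>
    by auto
  obtain \<pi> where \<pi>: "\<pi> permutes {..<n}"
    "\<And>t. 1 \<le> t \<Longrightarrow> t < c \<Longrightarrow> (\<Sum>s<t. sum q (B (e s))) \<in> partial_sums n q \<pi>"
    using block_prefix_sums_in_partial_sums[of "B \<circ> e" c n q] disjoint[OF assms(5)] reindex assms(3,7) in_\<Lambda>
    by auto
  show ?thesis
    unfolding c_def[symmetric]
  proof (rule card_le_kappa_of_common_prefix_sums[OF \<sigma>(1) \<pi>(1)])
    fix s assume "s < c"
    then have "A (e s) \<subseteq> {..<m}" "A (e s) \<noteq> {}"
      using assms(2,6) in_\<Lambda> by blast+
    then show "0 < sum p (A (e s))"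
      using assms(9) by (intro sum_pos) (auto intro: finite_subset)
  next
    fix t assume t: "1 \<le> t" "t < c"
    have "(\<Sum>s<t. sum p (A (e s))) = (\<Sum>s<t. sum q (B (e s)))"
      using t by (intro sum.cong[OF refl] assms(8) in_\<Lambda>) auto
    then show "(\<Sum>s<t. sum p (A (e s))) \<in> partial_sums m p \<sigma> \<inter> partial_sums n q \<pi>"
      using \<sigma>(2)[OF t] \<pi>(2)[OF t] by simp
  qed
qed

lemma card_support_labels_le_kappa:
  fixes lab :: "nat + nat \<Rightarrow> 'l"
  assumes "coupling m n p q P" "\<And>i. i < m \<Longrightarrow> 0 < p i" "\<And>j. j < n \<Longrightarrow> 0 < q j"
    and edge: "\<And>i j. i < m \<Longrightarrow> j < n \<Longrightarrow> P i j \<noteq> 0 \<Longrightarrow> lab (Inl i) = lab (Inr j)"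
  shows "card (lab ` ({..<m} <+> {..<n})) \<le> kappa m n p q"
proof -
  define V where "V = {..<m} <+> {..<n}"
  define A where "A l = {i. i < m \<and> lab (Inl i) = l}" for l
  define B where "B l = {j. j < n \<and> lab (Inr j) = l}" for l
  have nonempty: "A l \<noteq> {} \<and> B l \<noteq> {}" if l: "l \<in> lab ` V" for l
  proof -
    obtain v where "v \<in> V" "l = lab v"
      using l by blast
    then consider (row) i where "i < m" "l = lab (Inl i)" | (col) j where "j < n" "l = lab (Inr j)"
      by (auto simp: V_def)
    then show ?thesis
    proof cases
      case row
      then obtain j where "j < n" "P i j \<noteq> 0"
        using coupling_row_has_nonzero[OF assms(1)] assms(2) by (metis less_irrefl)
      then show ?thesis
        using row edge by (auto simp: A_def B_def)
    next
      case col
      then obtain i where "i < m" "P i j \<noteq> 0"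
        using coupling_col_has_nonzero[OF assms(1)] assms(3) by (metis less_irrefl)
      then show ?thesis
        using col edge by (auto simp: A_def B_def)
    qed
  qed
  show ?thesis
    unfolding V_def[symmetric]
  proof (rule card_le_kappa_of_balanced_blocks)
    show "A l \<noteq> {}" "B l \<noteq> {}" if "l \<in> lab ` V" for l
      using nonempty[OF that] by auto
    show "sum p (A l) = sum q (B l)" for l
      by (rule coupling_sum_balanced[OF assms(1)]) (auto simp: A_def B_def edge)
    show "finite (lab ` V)"
      by (simp add: V_def)
    show "disjoint_family_on A (lab ` V)" "disjoint_family_on B (lab ` V)"
      by (auto simp: disjoint_family_on_def A_def B_def)
    show "(\<Union>l\<in>lab ` V. A l) = {..<m}"
      by (auto simp: A_def V_def intro!: imageI)
    show "(\<Union>l\<in>lab ` V. B l) = {..<n}"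
      by (auto simp: B_def V_def intro!: imageI)
  qed (rule assms(2))
qed

lemma coupling_card_supp_ge:
  assumes "coupling m n p q P" "\<And>i. i < m \<Longrightarrow> 0 < p i" "\<And>j. j < n \<Longrightarrow> 0 < q j"
  shows "m + n \<le> kappa m n p q + card (supp m n P)"
proof -
  define V where "V = {..<m} <+> {..<n}"
  define E :: "((nat + nat) \<times> (nat + nat)) set" where "E = (\<lambda>(i, j). (Inl i, Inr j)) ` supp m n P"
  have "finite (supp m n P)"
    by (simp add: supp_eq_supp_on finite_supp_on)
  then obtain lab :: "nat + nat \<Rightarrow> nat + nat" where
    lab_edge: "\<forall>(u, v)\<in>E. lab u = lab v" and card_V: "card V \<le> card (lab ` V) + card E"
    using exists_component_labelling[of E V] by (auto simp: E_def V_def)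
  have "card (lab ` V) \<le> kappa m n p q"
    unfolding V_def using lab_edge
    by (intro card_support_labels_le_kappa[OF assms]) (auto simp: E_def supp_def)
  moreover have "card V = m + n"
    by (simp add: V_def card_Plus)
  moreover have "card E = card (supp m n P)"
    unfolding E_def by (rule card_image) (auto simp: inj_on_def)
  ultimately show ?thesis
    using card_V by linarith
qed

theorem theorem2p2:
  fixes m n :: nat and p q :: "nat \<Rightarrow> real" and P :: "nat \<Rightarrow> nat \<Rightarrow> real"
  assumes "m \<ge> 2" and "n \<ge> 2"
    and "prob_vec m p" and "prob_vec n q"
    and "coupling m n p q P"
    and "local_optimal m n p q P"
  shows "int m + int n - int (kappa m n p q) \<le> int (card (supp m n P))
       \<and> card (supp m n P) \<le> m + n - 1"
proof
  have "m + n \<le> kappa m n p q + card (supp m n P)"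
    using coupling_card_supp_ge[OF assms(5)] assms(3,4) by (simp add: prob_vec_def)
  then show "int m + int n - int (kappa m n p q) \<le> int (card (supp m n P))"
    by linarith
  have "card (supp m n P) < m + n"
    using local_optimal_card_supp_less[OF assms(6)] assms(1) by simp
  then show "card (supp m n P) \<le> m + n - 1"
    by linarith
qed

end
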